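(* Let $M_\lambda$ ($\lambda>0$) and $M$ be as in the context. Then $M_\lambda'(x)\to M'(x)$ as $\lambda\to0^+$, uniformly for $x$ in each compact subset of $[0,\infty)$.
   Context: For $\lambda>0$, $M_\lambda:[0,\infty)\to\mathbb R$ is defined by $M_\lambda(x)=0$ for $0\le x\le1$ and, for all $x>0$, $M_{\lambda}(x+1)=\int_0^x\frac{\lambda e^{-\lambda t}}{1-e^{-\lambda x}}\bigl(M_{\lambda}(t)+M_{\lambda}(x-t)\bigr)\,dt+1$. This is the expected number of intervals at saturation in the exponential parking problem. $M:[0,\infty)\to\mathbb R$ is defined by $M(x)=0$ for $0\le x\le1$ and, for $x>0$, $M(x+1)=\frac2x\int_0^xM(t)\,dt+1$. This is Rényi's expected number of intervals at saturation in the uniform parking problem. Derivatives are taken where they exist. Following the paper's convention, $M'_\lambda(x)=M'(x)=0$ on $(0,1)\cup(1,2)$; the points $x=1,2$, where the derivatives do not exist, are excluded. *)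

theory Defs
  imports "HOL-Analysis.Analysis"
begin

definition is_M_lambda :: "real \<Rightarrow> (real \<Rightarrow> real) \<Rightarrow> bool" where
  "is_M_lambda l f \<longleftrightarrow>
     (\<forall>x\<in>{0..1}. f x = 0) \<and>
     (\<forall>x>0. f (x + 1) =
        integral {0..x} (\<lambda>t. l * exp (- l * t) / (1 - exp (- l * x)) * (f t + f (x - t))) + 1)"

definition is_M_renyi :: "(real \<Rightarrow> real) \<Rightarrow> bool" where
  "is_M_renyi f \<longleftrightarrow>
     (\<forall>x\<in>{0..1}. f x = 0) \<and>
     (\<forall>x>0. f (x + 1) = 2 / x * integral {0..x} f + 1)"

definition deriv0 :: "(real \<Rightarrow> real) \<Rightarrow> real \<Rightarrow> real" where
  "deriv0 f x = (THE D. (f has_real_derivative D) (at x within {0..}))"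

end

theory Submission
  imports Defs "HOL-Real_Asymp.Real_Asymp"
begin

text \<open>Both recursions have the shape
  f(x + 1) = 1 + p(x) \<integral>[0,x] u f + q(x) \<integral>[0,x] v f.
  For M take p(x) = 2/x, u = 1, q = 0; for M_\<lambda>, after substituting t \<mapsto> x - t in the
  second half of the integrand, take p(x) = \<lambda>/(1 - exp(-\<lambda>x)), q = p - \<lambda>,
  u(t) = exp(-\<lambda>t), v(t) = exp(\<lambda>t). Every solution of such a recursion is continuous on
  (1, \<infinity>), and for y > 2 its derivative is obtained by differentiating the right-hand side
  at y - 1. Written with the running means (1/x) \<integral>[0,x], the coefficients of M_\<lambda> are
  functions of \<lambda>x alone whose limits at 0+ are the coefficients of M. Hence uniform
  convergence M_\<lambda> \<rightarrow> M on [0, n] propagates to [0, n + 1], and then the derivative formulas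
  converge uniformly on (2, b]. On [0, 2) - {1} both derivatives vanish.\<close>

lemma deriv0_eqI:
  assumes "(f has_real_derivative D) (at y within {0..})" "0 \<le> y"
  shows "deriv0 f y = D"
proof -
  have "at_right y \<le> at y within {0..}"
    using assms(2) by (intro at_le) auto
  then have "at y within {0..} \<noteq> bot"
    using trivial_limit_at_right_real bot.extremum_unique by metis
  then show ?thesis
    unfolding deriv0_def using assms(1) has_field_derivative_unique by blast
qed

lemma uniform_limit_rescale_at_right_0:
  fixes h :: "real \<Rightarrow> real"
  assumes "(h \<longlongrightarrow> c) (at_right 0)" "S \<subseteq> {0<..R}"
  shows "uniform_limit S (\<lambda>l x. h (l * x)) (\<lambda>_. c) (at_right 0)"
proof (rule uniform_limitI)
  fix e :: real assume "0 < e"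
  then obtain b where b: "0 < b" "\<And>w. 0 < w \<Longrightarrow> w < b \<Longrightarrow> dist (h w) c < e"
    using tendstoD[OF assms(1)] unfolding eventually_at_right_field by blast
  show "\<forall>\<^sub>F l in at_right 0. \<forall>x\<in>S. dist (h (l * x)) c < e"
    unfolding eventually_at_right_field
  proof (intro exI[of _ "b / max R 1"] conjI allI impI ballI)
    fix l x assume l: "0 < l" "l < b / max R 1" and x: "x \<in> S"
    have x0: "0 < x" "x \<le> R" using x assms(2) by auto
    have "l * x \<le> l * max R 1" using x0 l by (intro mult_left_mono) auto
    also have "\<dots> < b" using l by (simp add: field_simps)
    finally show "dist (h (l * x)) c < e" using b(2) l x0 by simp
  qed (use b in auto)
qed

lemma bounded_image_const: "bounded ((\<lambda>_. c) ` S)"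
  by (rule bounded_subset[of "{c}"]) auto

definition running_mean :: "(real \<Rightarrow> real) \<Rightarrow> real \<Rightarrow> real" where
  "running_mean g x = integral {0..x} g / x"

lemma bounded_running_mean:
  assumes "g integrable_on {0..R}" "bounded (g ` {0..R})"
  shows "bounded (running_mean g ` {0<..R})"
proof -
  obtain B where B: "0 \<le> B" "\<And>t. t \<in> {0..R} \<Longrightarrow> \<bar>g t\<bar> \<le> B"
    using assms(2) unfolding bounded_iff by (metis abs_ge_zero order.trans real_norm_def imageI)
  have "\<bar>running_mean g x\<bar> \<le> B" if "x \<in> {0<..R}" for x
  proof -
    have "g integrable_on {0..x}"
      using assms(1) by (rule integrable_subinterval_real) (use that in auto)
    then have "\<bar>integral {0..x} g\<bar> \<le> B * x"
      using has_integral_bound_real[of B "{}" g _ 0 x] B that by force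
    then show ?thesis using that by (simp add: running_mean_def divide_le_eq)
  qed
  then show ?thesis unfolding bounded_iff by (intro exI[of _ B]) auto
qed

lemma uniform_limit_running_mean:
  fixes g :: "'a \<Rightarrow> real \<Rightarrow> real"
  assumes "uniform_limit {0<..R} g G F"
    and "\<forall>\<^sub>F l in F. g l integrable_on {0..R}" and "G integrable_on {0..R}"
  shows "uniform_limit {0<..R} (\<lambda>l. running_mean (g l)) (running_mean G) F"
proof (rule uniform_limitI)
  fix e :: real assume "0 < e"
  have "\<forall>\<^sub>F l in F. \<forall>x\<in>{0<..R}. dist (g l x) (G x) < e / 2"
    using uniform_limitD[OF assms(1), of "e / 2"] \<open>0 < e\<close> by simp
  with assms(2) show "\<forall>\<^sub>F l in F. \<forall>x\<in>{0<..R}. dist (running_mean (g l) x) (running_mean G x) < e"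
  proof eventually_elim
    case (elim l)
    show ?case
    proof
      fix x assume x: "x \<in> {0<..R}"
      have "(g l) integrable_on {0..x}" "G integrable_on {0..x}"
        using elim(1) assms(3) x by (auto intro: integrable_subinterval_real)
      then have diff: "((\<lambda>t. g l t - G t) has_integral integral {0..x} (g l) - integral {0..x} G) {0..x}"
        by (intro has_integral_diff integrable_integral)
      have close: "\<bar>g l t - G t\<bar> \<le> e / 2" if "t \<in> {0..x} - {0}" for t
      proof -
        have "t \<in> {0<..R}" using x that by auto
        then show ?thesis using elim(2) by (simp add: dist_real_def less_imp_le)
      qed
      have "\<bar>integral {0..x} (g l) - integral {0..x} G\<bar> \<le> e / 2 * x"
        using has_integral_bound_real[OF _ _ diff, of "e / 2" "{0}"] close \<open>0 < e\<close> x by simp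
      also have "\<dots> < e * x" using x \<open>0 < e\<close> by simp
      finally show "dist (running_mean (g l) x) (running_mean G x) < e"
        using x by (simp add: running_mean_def dist_real_def diff_divide_distrib[symmetric] abs_div divide_less_eq)
    qed
  qed
qed

lemma uniform_limit_divide_by_arg:
  fixes f :: "'a \<Rightarrow> real \<Rightarrow> real"
  assumes "uniform_limit S f g F" "S \<subseteq> {1..}"
  shows "uniform_limit S (\<lambda>l x. f l x / x) (\<lambda>x. g x / x) F"
proof (rule uniform_limitI)
  fix e :: real assume "0 < e"
  from uniform_limitD[OF assms(1) this]
  show "\<forall>\<^sub>F l in F. \<forall>x\<in>S. dist (f l x / x) (g x / x) < e"
  proof (rule eventually_mono, intro ballI)
    fix l x assume close: "\<forall>x\<in>S. dist (f l x) (g x) < e" and x: "x \<in> S"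
    have "1 \<le> x" using x assms(2) by auto
    then have "dist (f l x / x) (g x / x) \<le> dist (f l x) (g x)"
      by (simp add: dist_real_def diff_divide_distrib[symmetric] abs_div divide_le_eq mult_le_cancel_left1)
    then show "dist (f l x / x) (g x / x) < e" using close x by fastforce
  qed
qed

text \<open>The integrability premises of \<open>recursion\<close> are what the exponential case needs to
  substitute t \<mapsto> x - t; integrability for all x is then derived by induction.\<close>

locale parking_recursion =
  fixes f p q u v p' q' :: "real \<Rightarrow> real"
  assumes f_eq_0: "\<And>x. 0 \<le> x \<Longrightarrow> x \<le> 1 \<Longrightarrow> f x = 0"
    and recursion: "\<And>x. 0 < x \<Longrightarrow> (\<lambda>t. u t * f t) integrable_on {0..x} \<Longrightarrow>
      (\<lambda>t. v t * f t) integrable_on {0..x} \<Longrightarrow>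
      f (x + 1) = 1 + p x * integral {0..x} (\<lambda>t. u t * f t) + q x * integral {0..x} (\<lambda>t. v t * f t)"
    and p_deriv: "\<And>x. 0 < x \<Longrightarrow> (p has_real_derivative p' x) (at x)"
    and q_deriv: "\<And>x. 0 < x \<Longrightarrow> (q has_real_derivative q' x) (at x)"
    and continuous_u: "continuous_on UNIV u" and continuous_v: "continuous_on UNIV v"
begin

lemma f_eq_1:
  assumes "1 < y" "y \<le> 2"
  shows "f y = 1"
proof -
  have zero: "w t * f t = 0" if "t \<in> {0..y - 1}" for w t
    using f_eq_0 assms that by auto
  have "(\<lambda>t. w t * f t) integrable_on {0..y - 1}" for w
    by (rule integrable_eq[OF integrable_0]) (simp add: zero)
  moreover have "integral {0..y - 1} (\<lambda>t. w t * f t) = 0" for w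
    using integral_cong[of "{0..y - 1}" "\<lambda>t. w t * f t" "\<lambda>_. 0"] zero by simp
  ultimately have "f (y - 1 + 1) = 1"
    using recursion[of "y - 1"] assms by simp
  then show ?thesis by simp
qed

lemma integrable_weighted_0_2:
  assumes "continuous_on UNIV w"
  shows "(\<lambda>t. w t * f t) integrable_on {0..2}"
proof -
  have "(\<lambda>t. w t * f t) integrable_on {0..1}"
    by (rule integrable_eq[OF integrable_0]) (use f_eq_0 in auto)
  moreover have "w integrable_on {1..2}"
    using assms by (intro integrable_continuous_real) (auto intro: continuous_on_subset)
  then have "(\<lambda>t. w t * f t) integrable_on {1..2}"
    by (rule integrable_spike_finite[of "{1}", rotated 2]) (auto simp: f_eq_1)
  ultimately show ?thesis
    by (intro Henstock_Kurzweil_Integration.integrable_combine[of 0 1 2]) auto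
qed

lemma continuous_on_f_if_integrable:
  assumes "(\<lambda>t. u t * f t) integrable_on {0..b}" "(\<lambda>t. v t * f t) integrable_on {0..b}"
  shows "continuous_on {1<..b + 1} f"
proof -
  let ?U = "\<lambda>x. integral {0..x} (\<lambda>t. u t * f t)" and ?V = "\<lambda>x. integral {0..x} (\<lambda>t. v t * f t)"
  have shift: "(\<lambda>y. y - 1) ` {1<..b + 1} \<subseteq> {0<..}" "(\<lambda>y. y - 1) ` {1<..b + 1} \<subseteq> {0..b}"
    by auto
  have p: "continuous_on {0<..} p" and q: "continuous_on {0<..} q"
    using p_deriv q_deriv by (auto intro!: continuous_at_imp_continuous_on DERIV_isCont)
  have U: "continuous_on {0..b} ?U" and V: "continuous_on {0..b} ?V"
    using assms by (auto intro: indefinite_integral_continuous_1)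
  have cont: "continuous_on {1<..b + 1} (\<lambda>y. 1 + p (y - 1) * ?U (y - 1) + q (y - 1) * ?V (y - 1))"
    by (intro continuous_intros continuous_on_compose2[OF p _ shift(1)] continuous_on_compose2[OF q _ shift(1)]
        continuous_on_compose2[OF U _ shift(2)] continuous_on_compose2[OF V _ shift(2)])
  have eq: "f y = 1 + p (y - 1) * ?U (y - 1) + q (y - 1) * ?V (y - 1)" if y: "y \<in> {1<..b + 1}" for y
  proof -
    have "{0..y - 1} \<subseteq> {0..b}" using y by auto
    then show ?thesis
      using recursion[of "y - 1"] integrable_subinterval_real[OF assms(1)]
        integrable_subinterval_real[OF assms(2)] y by simp
  qed
  show ?thesis
    using cont by (rule continuous_on_eq) (simp add: eq)
qed

lemma integrable_weighted:
  assumes "continuous_on UNIV w"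
  shows "(\<lambda>t. w t * f t) integrable_on {0..x}"
proof -
  have "\<forall>w. continuous_on UNIV w \<longrightarrow> (\<lambda>t. w t * f t) integrable_on {0..2 + real n}" for n
  proof (induction n)
    case 0
    then show ?case using integrable_weighted_0_2 by simp
  next
    case (Suc n)
    have "continuous_on {1<..2 + real n + 1} f"
      using Suc.IH continuous_u continuous_v by (intro continuous_on_f_if_integrable) auto
    then have "continuous_on {2 + real n..2 + real (Suc n)} f"
      by (rule continuous_on_subset) auto
    then have "(\<lambda>t. w t * f t) integrable_on {2 + real n..2 + real (Suc n)}"
      if "continuous_on UNIV w" for w
      using that by (intro integrable_continuous_real continuous_intros) (auto intro: continuous_on_subset)
    then show ?case
      using Suc.IH by (auto intro: Henstock_Kurzweil_Integration.integrable_combine[of 0 "2 + real n"])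
  qed
  moreover obtain n where "x \<le> real n"
    using real_arch_simple by blast
  then have "{0..x} \<subseteq> {0..2 + real n}" by auto
  ultimately show ?thesis
    using assms integrable_subinterval_real by blast
qed

lemma f_recursion:
  "0 < x \<Longrightarrow>
    f (x + 1) = 1 + p x * integral {0..x} (\<lambda>t. u t * f t) + q x * integral {0..x} (\<lambda>t. v t * f t)"
  using recursion integrable_weighted continuous_u continuous_v by blast

lemma continuous_on_f: "continuous_on {1<..} f"
proof (rule continuous_at_imp_continuous_on, rule ballI)
  fix y :: real assume "y \<in> {1<..}"
  moreover have "continuous_on {1<..y + 1} f"
    using integrable_weighted continuous_u continuous_v by (intro continuous_on_f_if_integrable)
  then have "continuous_on {1<..<y + 1} f"
    by (rule continuous_on_subset) auto
  ultimately show "isCont f y"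
    by (subst (asm) continuous_on_eq_continuous_at) auto
qed

lemma bounded_f: "bounded (f ` {0..b})"
proof -
  have "compact (f ` {2..b})"
    by (intro compact_continuous_image continuous_on_subset[OF continuous_on_f]) auto
  then have "bounded ({0, 1} \<union> f ` {2..b})"
    by (simp add: compact_imp_bounded)
  moreover have "f ` {0..b} \<subseteq> {0, 1} \<union> f ` {2..b}"
  proof
    fix z assume "z \<in> f ` {0..b}"
    then obtain t where "t \<in> {0..b}" "z = f t" by blast
    then show "z \<in> {0, 1} \<union> f ` {2..b}"
      using f_eq_0[of t] f_eq_1[of t] by (cases "t \<le> 1"; cases "t \<le> 2") auto
  qed
  ultimately show ?thesis by (rule bounded_subset)
qed

lemma has_real_derivative_weighted_integral:
  assumes "continuous_on UNIV w" "1 < x"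
  shows "((\<lambda>y. integral {0..y} (\<lambda>t. w t * f t)) has_real_derivative w x * f x) (at x)"
proof -
  have "((\<lambda>y. integral {0..y} (\<lambda>t. w t * f t)) has_vector_derivative w x * f x)
      (at x within {0..x + 1} - {})"
  proof (rule integral_has_vector_derivative_continuous_at)
    have "isCont (\<lambda>t. w t * f t) x"
      using assms continuous_on_f
      by (intro isCont_mult) (auto simp: continuous_on_eq_continuous_at)
    then show "continuous (at x within {0..x + 1} - {}) (\<lambda>t. w t * f t)"
      by (rule continuous_at_imp_continuous_at_within)
  qed (use assms integrable_weighted in auto)
  moreover have "at x within {0..x + 1} - {} = at x"
    using assms by (intro at_within_interior) auto
  ultimately show ?thesis
    by (simp add: has_real_derivative_iff_has_vector_derivative)
qed

lemma deriv0_f_shift: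
  assumes "1 < x"
  shows "deriv0 f (x + 1) = p' x * integral {0..x} (\<lambda>t. u t * f t) + q' x * integral {0..x} (\<lambda>t. v t * f t)
    + (p x * u x + q x * v x) * f x"
proof -
  let ?U = "\<lambda>x. integral {0..x} (\<lambda>t. u t * f t)" and ?V = "\<lambda>x. integral {0..x} (\<lambda>t. v t * f t)"
  let ?h = "\<lambda>x. 1 + p x * ?U x + q x * ?V x"
  let ?D = "p' x * ?U x + q' x * ?V x + (p x * u x + q x * v x) * f x"
  have "(?h has_real_derivative
      0 + (p' x * ?U x + u x * f x * p x) + (q' x * ?V x + v x * f x * q x)) (at x)"
    using assms by (intro DERIV_add DERIV_mult DERIV_const p_deriv q_deriv
        has_real_derivative_weighted_integral continuous_u continuous_v) auto
  then have "(?h has_real_derivative ?D) (at x)"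
    by (simp add: algebra_simps)
  then have "((\<lambda>y. ?h (y + - 1)) has_real_derivative ?D) (at (x + 1))"
    using DERIV_shift[of ?h ?D "x + 1" "- 1"] by simp
  then have "(f has_real_derivative ?D) (at (x + 1))"
  proof (rule has_field_derivative_transform_within_open[of _ _ _ "{1<..}"])
    show "?h (y + - 1) = f y" if "y \<in> {1<..}" for y
      using f_recursion[of "y - 1"] that by simp
  qed (use assms in simp_all)
  then show ?thesis
    using assms by (intro deriv0_eqI[OF has_field_derivative_at_within]) auto
qed

lemma deriv0_f_below_2:
  assumes "0 \<le> y" "y < 2" "y \<noteq> 1"
  shows "deriv0 f y = 0"
proof -
  define d where "d = min \<bar>y - 1\<bar> (2 - y)"
  have "0 < d" using assms by (simp add: d_def)
  have "\<exists>c. \<forall>z\<in>{0..}. dist z y < d \<longrightarrow> f z = c"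
  proof (cases "y < 1")
    case True
    then have "\<forall>z\<in>{0..}. dist z y < d \<longrightarrow> f z = 0"
      using f_eq_0 by (auto simp: d_def dist_real_def)
    then show ?thesis by blast
  next
    case False
    then have "\<forall>z\<in>{0..}. dist z y < d \<longrightarrow> f z = 1"
      using f_eq_1 assms by (auto simp: d_def dist_real_def)
    then show ?thesis by blast
  qed
  then obtain c where c: "\<And>z. z \<in> {0..} \<Longrightarrow> dist z y < d \<Longrightarrow> c = f z"
    by metis
  have "((\<lambda>_. c) has_real_derivative 0) (at y within {0..})"
    by simp
  then have "(f has_real_derivative 0) (at y within {0..})"
    by (rule has_field_derivative_transform_within[OF _ \<open>0 < d\<close>]) (use assms(1) c in auto)
  then show ?thesis using assms(1) by (rule deriv0_eqI)
qed
end

lemma has_integral_exp_reflect: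
  fixes f :: "real \<Rightarrow> real"
  assumes "((\<lambda>t. exp (l * t) * f t) has_integral I) {0..x}"
  shows "((\<lambda>t. exp (- (l * t)) * f (x - t)) has_integral exp (- (l * x)) * I) {0..x}"
proof -
  have "((\<lambda>t. exp (l * (x - t)) * f (x - t)) has_integral I) {0..x}"
    using has_integral_affinity[of "\<lambda>t. exp (l * t) * f t" I 0 x "-1" x] assms by simp
  then have "((\<lambda>t. exp (- (l * x)) * (exp (l * (x - t)) * f (x - t))) has_integral exp (- (l * x)) * I) {0..x}"
    by (rule has_integral_mult_right)
  moreover have "exp (- (l * x)) * (exp (l * (x - t)) * f (x - t)) = exp (- (l * t)) * f (x - t)" for t
  proof -
    have "exp (- (l * x)) * exp (l * (x - t)) = exp (- (l * t))"
      by (simp add: exp_add[symmetric] algebra_simps)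
    then show ?thesis by (metis mult.assoc)
  qed
  ultimately show ?thesis by simp
qed

lemma has_real_derivative_trunc_exp_norm:
  assumes "0 < l" "0 < x"
  shows "((\<lambda>x. l / (1 - exp (- (l * x)))) has_real_derivative
      - (l\<^sup>2 * exp (- (l * x)) / (1 - exp (- (l * x)))\<^sup>2)) (at x)"
proof -
  have "1 - exp (- (l * x)) \<noteq> 0" using assms by simp
  then show ?thesis
    by (auto intro!: derivative_eq_intros simp: power2_eq_square)
qed

lemma is_M_lambda_recursion:
  assumes "0 < l" "is_M_lambda l f" "0 < x"
    and integrable: "(\<lambda>t. exp (- (l * t)) * f t) integrable_on {0..x}"
      "(\<lambda>t. exp (l * t) * f t) integrable_on {0..x}"
  shows "f (x + 1) = 1 + l / (1 - exp (- (l * x))) * integral {0..x} (\<lambda>t. exp (- (l * t)) * f t)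
    + (l / (1 - exp (- (l * x))) - l) * integral {0..x} (\<lambda>t. exp (l * t) * f t)"
proof -
  define c where "c = l / (1 - exp (- (l * x)))"
  define A where "A = integral {0..x} (\<lambda>t. exp (- (l * t)) * f t)"
  define B where "B = integral {0..x} (\<lambda>t. exp (l * t) * f t)"
  have "((\<lambda>t. c * (exp (- (l * t)) * f t) + c * (exp (- (l * t)) * f (x - t)))
      has_integral c * A + c * (exp (- (l * x)) * B)) {0..x}"
    unfolding A_def B_def using integrable
    by (intro has_integral_add has_integral_mult_right has_integral_exp_reflect) auto
  moreover have "l * exp (- l * t) / (1 - exp (- l * x)) * (f t + f (x - t)) =
      c * (exp (- (l * t)) * f t) + c * (exp (- (l * t)) * f (x - t))" for t
    by (simp add: c_def add_divide_distrib[symmetric] algebra_simps)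
  ultimately have "integral {0..x} (\<lambda>t. l * exp (- l * t) / (1 - exp (- l * x)) * (f t + f (x - t)))
      = c * A + c * (exp (- (l * x)) * B)"
    by (simp add: integral_unique)
  moreover have "f (x + 1) =
      integral {0..x} (\<lambda>t. l * exp (- l * t) / (1 - exp (- l * x)) * (f t + f (x - t))) + 1"
    using assms(2,3) unfolding is_M_lambda_def by blast
  moreover have "c * exp (- (l * x)) = c - l"
  proof -
    have "1 - exp (- (l * x)) \<noteq> 0" using assms(1,3) by simp
    then show ?thesis by (simp add: c_def field_simps)
  qed
  ultimately have "f (x + 1) = 1 + c * A + (c - l) * B"
    by (simp add: mult.assoc[symmetric])
  then show ?thesis
    unfolding A_def B_def c_def .
qed

lemma parking_recursion_exp:
  assumes "0 < l" "is_M_lambda l f"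
  shows "parking_recursion f (\<lambda>x. l / (1 - exp (- (l * x)))) (\<lambda>x. l / (1 - exp (- (l * x))) - l)
    (\<lambda>t. exp (- (l * t))) (\<lambda>t. exp (l * t))
    (\<lambda>x. - (l\<^sup>2 * exp (- (l * x)) / (1 - exp (- (l * x)))\<^sup>2))
    (\<lambda>x. - (l\<^sup>2 * exp (- (l * x)) / (1 - exp (- (l * x)))\<^sup>2))"
proof
  show "f x = 0" if "0 \<le> x" "x \<le> 1" for x
    using assms(2) that unfolding is_M_lambda_def by auto
  show p_deriv: "((\<lambda>x. l / (1 - exp (- (l * x)))) has_real_derivative
      - (l\<^sup>2 * exp (- (l * x)) / (1 - exp (- (l * x)))\<^sup>2)) (at x)" if "0 < x" for x
    using assms(1) that by (rule has_real_derivative_trunc_exp_norm)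
  show "((\<lambda>x. l / (1 - exp (- (l * x))) - l) has_real_derivative
      - (l\<^sup>2 * exp (- (l * x)) / (1 - exp (- (l * x)))\<^sup>2)) (at x)" if "0 < x" for x
    using DERIV_diff[OF p_deriv[OF that] DERIV_const[of l]] by simp
  show "continuous_on UNIV (\<lambda>t. exp (- (l * t)))" "continuous_on UNIV (\<lambda>t. exp (l * t))"
    by (intro continuous_intros)+
qed (rule is_M_lambda_recursion[OF assms])

lemma parking_recursion_renyi:
  assumes "is_M_renyi f"
  shows "parking_recursion f (\<lambda>x. 2 / x) (\<lambda>_. 0) (\<lambda>_. 1) (\<lambda>_. 0) (\<lambda>x. - 2 / x\<^sup>2) (\<lambda>_. 0)"
proof
  show "f x = 0" if "0 \<le> x" "x \<le> 1" for x
    using assms that unfolding is_M_renyi_def by auto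
  show "((\<lambda>x. 2 / x) has_real_derivative - 2 / x\<^sup>2) (at x)" if "0 < x" for x
    using that by (auto intro!: derivative_eq_intros simp: power2_eq_square)
  show "f (x + 1) = 1 + 2 / x * integral {0..x} (\<lambda>t. 1 * f t) + 0 * integral {0..x} (\<lambda>t. 0 * f t)"
    if "0 < x" for x
    using assms that unfolding is_M_renyi_def by simp
qed simp_all

text \<open>The coefficients of the exponential recursion, rescaled by powers of x so that they
  depend on w = \<lambda>x only; their limits at w \<rightarrow> 0+ are the corresponding coefficients
  of Renyi's recursion.\<close>

definition exp_mean_coeff :: "real \<Rightarrow> real" where
  "exp_mean_coeff w = w / (1 - exp (- w))"

definition exp_deriv_coeff :: "real \<Rightarrow> real" where
  "exp_deriv_coeff w = w\<^sup>2 * exp (- w) / (1 - exp (- w))\<^sup>2"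

definition exp_value_coeff :: "real \<Rightarrow> real" where
  "exp_value_coeff w = w * (1 + exp (- w)) / (1 - exp (- w))"

lemma tendsto_exp_mean_coeff: "(exp_mean_coeff \<longlongrightarrow> 1) (at_right 0)"
  unfolding exp_mean_coeff_def by real_asymp

lemma tendsto_exp_mean_coeff_minus: "((\<lambda>w. exp_mean_coeff w - w) \<longlongrightarrow> 1) (at_right 0)"
  unfolding exp_mean_coeff_def by real_asymp

lemma tendsto_exp_deriv_coeff: "(exp_deriv_coeff \<longlongrightarrow> 1) (at_right 0)"
  unfolding exp_deriv_coeff_def by real_asymp

lemma tendsto_exp_value_coeff: "(exp_value_coeff \<longlongrightarrow> 2) (at_right 0)"
  unfolding exp_value_coeff_def by real_asymp

locale parking_limit =
  fixes Ml :: "real \<Rightarrow> real \<Rightarrow> real" and M :: "real \<Rightarrow> real"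
  assumes is_M_lambda: "\<And>l. 0 < l \<Longrightarrow> is_M_lambda l (Ml l)"
    and is_M_renyi: "is_M_renyi M"
begin

sublocale renyi: parking_recursion M "\<lambda>x. 2 / x" "\<lambda>_. 0" "\<lambda>_. 1" "\<lambda>_. 0" "\<lambda>x. - 2 / x\<^sup>2" "\<lambda>_. 0"
  by (rule parking_recursion_renyi[OF is_M_renyi])

lemma parking_recursion_Ml:
  assumes "0 < l"
  shows "parking_recursion (Ml l) (\<lambda>x. l / (1 - exp (- (l * x)))) (\<lambda>x. l / (1 - exp (- (l * x))) - l)
    (\<lambda>t. exp (- (l * t))) (\<lambda>t. exp (l * t))
    (\<lambda>x. - (l\<^sup>2 * exp (- (l * x)) / (1 - exp (- (l * x)))\<^sup>2))
    (\<lambda>x. - (l\<^sup>2 * exp (- (l * x)) / (1 - exp (- (l * x)))\<^sup>2))"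
  using assms is_M_lambda[OF assms] by (rule parking_recursion_exp)

lemma integrable_M: "M integrable_on {0..R}"
  using renyi.integrable_weighted[of "\<lambda>_. 1"] by simp

lemma bounded_running_mean_M: "bounded (running_mean M ` {0<..R})"
  using integrable_M renyi.bounded_f by (rule bounded_running_mean)

lemma M_recursion: "0 < x \<Longrightarrow> M (x + 1) = 1 + 2 * running_mean M x"
  using renyi.f_recursion by (simp add: running_mean_def)

lemma Ml_recursion:
  assumes "0 < l" "0 < x"
  shows "Ml l (x + 1) = 1 + exp_mean_coeff (l * x) * running_mean (\<lambda>t. exp (- (l * t)) * Ml l t) x
    + (exp_mean_coeff (l * x) - l * x) * running_mean (\<lambda>t. exp (l * t) * Ml l t) x"
proof -
  define a where "a = exp_mean_coeff (l * x)"
  have "l / (1 - exp (- (l * x))) = a / x"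
    using assms(2) by (simp add: a_def exp_mean_coeff_def)
  then have "Ml l (x + 1) = 1 + a / x * integral {0..x} (\<lambda>t. exp (- (l * t)) * Ml l t)
      + (a / x - l) * integral {0..x} (\<lambda>t. exp (l * t) * Ml l t)"
    using parking_recursion.f_recursion[OF parking_recursion_Ml[OF assms(1)] assms(2)] by simp
  then show ?thesis
    using assms(2) unfolding a_def by (simp add: running_mean_def field_simps)
qed

lemma uniform_limit_running_mean_weighted:
  assumes "uniform_limit {0<..R} Ml M (at_right 0)"
    and "(w \<longlongrightarrow> 1) (at_right 0)" "continuous_on UNIV w"
  shows "uniform_limit {0<..R} (\<lambda>l. running_mean (\<lambda>t. w (l * t) * Ml l t)) (running_mean M) (at_right 0)"
proof (rule uniform_limit_running_mean)
  have "uniform_limit {0<..R} (\<lambda>l t. w (l * t) * Ml l t) (\<lambda>t. 1 * M t) (at_right 0)"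
  proof (rule uniform_lim_mult)
    show "bounded (M ` {0<..R})"
      using renyi.bounded_f by (rule bounded_subset) auto
  qed (use assms uniform_limit_rescale_at_right_0[of w 1 "{0<..R}" R] bounded_image_const in auto)
  then show "uniform_limit {0<..R} (\<lambda>l t. w (l * t) * Ml l t) M (at_right 0)"
    by simp
  show "\<forall>\<^sub>F l in at_right 0. (\<lambda>t. w (l * t) * Ml l t) integrable_on {0..R}"
    using eventually_at_right_less[of 0]
  proof (rule eventually_mono)
    fix l :: real assume "0 < l"
    have "continuous_on UNIV (\<lambda>t. w (l * t))"
      using assms(3) by (auto intro: continuous_on_compose2 continuous_intros)
    then show "(\<lambda>t. w (l * t) * Ml l t) integrable_on {0..R}"
      by (rule parking_recursion.integrable_weighted[OF parking_recursion_Ml[OF \<open>0 < l\<close>]])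
  qed
qed (rule integrable_M)

lemma uniform_limit_running_means_Ml:
  assumes "uniform_limit {0<..R} Ml M (at_right 0)"
  shows "uniform_limit {0<..R} (\<lambda>l. running_mean (\<lambda>t. exp (- (l * t)) * Ml l t)) (running_mean M)
      (at_right 0)"
    and "uniform_limit {0<..R} (\<lambda>l. running_mean (\<lambda>t. exp (l * t) * Ml l t)) (running_mean M)
      (at_right 0)"
   by (rule uniform_limit_running_mean_weighted[OF assms];
       (real_asymp | intro continuous_intros))+

lemma uniform_limit_Ml_on_0_1: "uniform_limit {0..1} Ml M (at_right 0)"
proof -
  have "\<forall>\<^sub>F l in at_right 0. \<forall>x\<in>{0..1}. M x = Ml l x"
    using eventually_at_right_less[of 0]
  proof (rule eventually_mono)
    fix l :: real assume "0 < l"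
    then show "\<forall>x\<in>{0..1}. M x = Ml l x"
      using renyi.f_eq_0 parking_recursion.f_eq_0[OF parking_recursion_Ml] by simp
  qed
  then show ?thesis
    using uniform_limit_cong[where f="\<lambda>_. M" and g=Ml and h=M and i=M] uniform_limit_const by blast
qed

lemma uniform_limit_Ml_shift:
  assumes "uniform_limit {0..R} Ml M (at_right 0)"
  shows "uniform_limit {1<..R + 1} Ml M (at_right 0)"
proof -
  have "uniform_limit {0<..R} Ml M (at_right 0)"
    using assms by (rule uniform_limit_on_subset) auto
  note means = uniform_limit_running_means_Ml[OF this]
  have "uniform_limit {0<..R}
      (\<lambda>l x. 1 + exp_mean_coeff (l * x) * running_mean (\<lambda>t. exp (- (l * t)) * Ml l t) x
        + (exp_mean_coeff (l * x) - l * x) * running_mean (\<lambda>t. exp (l * t) * Ml l t) x)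
      (\<lambda>x. 1 + 1 * running_mean M x + 1 * running_mean M x) (at_right 0)"
    by (intro uniform_limit_add uniform_limit_const uniform_lim_mult means bounded_image_const
        bounded_running_mean_M uniform_limit_rescale_at_right_0[where R=R]
        tendsto_exp_mean_coeff tendsto_exp_mean_coeff_minus subset_refl)
  moreover have "\<forall>\<^sub>F l in at_right 0. \<forall>x\<in>{0<..R}.
      1 + exp_mean_coeff (l * x) * running_mean (\<lambda>t. exp (- (l * t)) * Ml l t) x
        + (exp_mean_coeff (l * x) - l * x) * running_mean (\<lambda>t. exp (l * t) * Ml l t) x
      = Ml l (x + 1)"
    using eventually_at_right_less[of 0] by (rule eventually_mono) (simp add: Ml_recursion)
  ultimately have "uniform_limit {0<..R} (\<lambda>l x. Ml l (x + 1)) (\<lambda>x. M (x + 1)) (at_right 0)"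
    by (subst (asm) uniform_limit_cong) (auto simp: M_recursion)
  then have "uniform_limit {1<..R + 1} (\<lambda>l y. Ml l (y - 1 + 1)) (\<lambda>y. M (y - 1 + 1)) (at_right 0)"
    by (rule uniform_limit_compose') auto
  then show ?thesis by simp
qed

lemma uniform_limit_Ml: "uniform_limit {0..b} Ml M (at_right 0)"
proof -
  have lim: "uniform_limit {0..1 + real n} Ml M (at_right 0)" for n
  proof (induction n)
    case 0
    then show ?case using uniform_limit_Ml_on_0_1 by simp
  next
    case (Suc n)
    have "{0..1 + real (Suc n)} = {0..1 + real n} \<union> {1<..1 + real n + 1}"
      by auto
    then show ?case
      using uniform_limit_on_Un[OF Suc.IH uniform_limit_Ml_shift[OF Suc.IH]] by simp
  qed
  obtain n where "b \<le> real n"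
    using real_arch_simple by blast
  then show ?thesis
    by (intro uniform_limit_on_subset[OF lim[of n]]) auto
qed

lemma deriv0_M_shift:
  assumes "1 < x"
  shows "deriv0 M (x + 1) = (2 * M x - (running_mean M x + running_mean M x)) / x"
  using renyi.deriv0_f_shift[OF assms] assms
  by (simp add: running_mean_def field_simps power2_eq_square)

lemma deriv0_Ml_shift:
  assumes "0 < l" "1 < x"
  shows "deriv0 (Ml l) (x + 1) = (exp_value_coeff (l * x) * Ml l x
    - (exp_deriv_coeff (l * x) * running_mean (\<lambda>t. exp (- (l * t)) * Ml l t) x
      + exp_deriv_coeff (l * x) * running_mean (\<lambda>t. exp (l * t) * Ml l t) x)) / x"
proof -
  define E where "E = exp (- (l * x))"
  define A where "A = exp_deriv_coeff (l * x)"
  define B where "B = exp_value_coeff (l * x)"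
  have x: "x \<noteq> 0" and E: "1 - E \<noteq> 0" "E * exp (l * x) = 1"
    using assms by (auto simp: E_def exp_minus field_simps)
  have "- (l\<^sup>2 * E / (1 - E)\<^sup>2) = - A / x\<^sup>2"
    using x by (simp add: A_def exp_deriv_coeff_def E_def power_mult_distrib)
  moreover have "l / (1 - E) * E + (l / (1 - E) - l) * exp (l * x) = B / x"
  proof -
    have "(l / (1 - E) - l) * exp (l * x) = l * (E * exp (l * x)) / (1 - E)"
      using E(1) by (simp add: divide_simps) (simp add: algebra_simps)
    also have "\<dots> = l / (1 - E)" using E(2) by simp
    finally show ?thesis
      using x E(1) unfolding B_def exp_value_coeff_def E_def[symmetric]
      by (simp add: divide_simps) (simp add: algebra_simps)
  qed
  ultimately have "deriv0 (Ml l) (x + 1) = - A / x\<^sup>2 * integral {0..x} (\<lambda>t. exp (- (l * t)) * Ml l t)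
      - A / x\<^sup>2 * integral {0..x} (\<lambda>t. exp (l * t) * Ml l t) + B / x * Ml l x"
    using parking_recursion.deriv0_f_shift[OF parking_recursion_Ml[OF assms(1)] assms(2)]
    by (simp add: E_def)
  then show ?thesis
    using x unfolding A_def B_def running_mean_def by (simp add: field_simps power2_eq_square)
qed

lemma uniform_limit_deriv0_shift:
  "uniform_limit {1<..b} (\<lambda>l x. deriv0 (Ml l) (x + 1)) (\<lambda>x. deriv0 M (x + 1)) (at_right 0)"
proof -
  have sub: "{1<..b} \<subseteq> {0<..b}" by auto
  have lim: "uniform_limit {0<..b} Ml M (at_right 0)"
    using uniform_limit_Ml by (rule uniform_limit_on_subset) auto
  note means = uniform_limit_running_means_Ml[OF lim, THEN uniform_limit_on_subset, OF sub]
  have "uniform_limit {1<..b}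
      (\<lambda>l x. exp_value_coeff (l * x) * Ml l x
        - (exp_deriv_coeff (l * x) * running_mean (\<lambda>t. exp (- (l * t)) * Ml l t) x
          + exp_deriv_coeff (l * x) * running_mean (\<lambda>t. exp (l * t) * Ml l t) x))
      (\<lambda>x. 2 * M x - (1 * running_mean M x + 1 * running_mean M x)) (at_right 0)"
    by (intro uniform_limit_minus uniform_limit_add uniform_lim_mult means bounded_image_const
        uniform_limit_on_subset[OF lim sub] uniform_limit_rescale_at_right_0[OF _ sub]
        tendsto_exp_value_coeff tendsto_exp_deriv_coeff
        bounded_subset[OF renyi.bounded_f] bounded_subset[OF bounded_running_mean_M]) auto
  then have "uniform_limit {1<..b}
      (\<lambda>l x. (exp_value_coeff (l * x) * Ml l x
        - (exp_deriv_coeff (l * x) * running_mean (\<lambda>t. exp (- (l * t)) * Ml l t) x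
          + exp_deriv_coeff (l * x) * running_mean (\<lambda>t. exp (l * t) * Ml l t) x)) / x)
      (\<lambda>x. (2 * M x - (1 * running_mean M x + 1 * running_mean M x)) / x) (at_right 0)"
    by (rule uniform_limit_divide_by_arg) auto
  moreover have "\<forall>\<^sub>F l in at_right 0. \<forall>x\<in>{1<..b}.
      (exp_value_coeff (l * x) * Ml l x
        - (exp_deriv_coeff (l * x) * running_mean (\<lambda>t. exp (- (l * t)) * Ml l t) x
          + exp_deriv_coeff (l * x) * running_mean (\<lambda>t. exp (l * t) * Ml l t) x)) / x
      = deriv0 (Ml l) (x + 1)"
    using eventually_at_right_less[of 0] by (rule eventually_mono) (simp add: deriv0_Ml_shift)
  ultimately show ?thesis
    by (subst (asm) uniform_limit_cong) (auto simp: deriv0_M_shift)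
qed

lemma uniform_limit_deriv0_below_2:
  "uniform_limit ({0..<2} - {1}) (\<lambda>l. deriv0 (Ml l)) (deriv0 M) (at_right 0)"
proof -
  have "\<forall>\<^sub>F l in at_right 0. \<forall>x\<in>{0..<2} - {1}. deriv0 M x = deriv0 (Ml l) x"
    using eventually_at_right_less[of 0]
  proof (rule eventually_mono)
    fix l :: real assume "0 < l"
    then show "\<forall>x\<in>{0..<2} - {1}. deriv0 M x = deriv0 (Ml l) x"
      using renyi.deriv0_f_below_2 parking_recursion.deriv0_f_below_2[OF parking_recursion_Ml] by simp
  qed
  then show ?thesis
    using uniform_limit_cong[where f="\<lambda>_. deriv0 M" and g="\<lambda>l. deriv0 (Ml l)" and h="deriv0 M"
        and i="deriv0 M"] uniform_limit_const by blast
qed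

lemma uniform_limit_deriv0_beyond_2:
  "uniform_limit {2<..b} (\<lambda>l. deriv0 (Ml l)) (deriv0 M) (at_right 0)"
proof -
  have "uniform_limit {2<..b} (\<lambda>l y. deriv0 (Ml l) (y - 1 + 1)) (\<lambda>y. deriv0 M (y - 1 + 1)) (at_right 0)"
    using uniform_limit_deriv0_shift[of "b - 1"] by (rule uniform_limit_compose') auto
  then show ?thesis by simp
qed

end

theorem lemma2:
  fixes Ml :: "real \<Rightarrow> real \<Rightarrow> real" and M :: "real \<Rightarrow> real" and K :: "real set"
  assumes "\<And>l. l > 0 \<Longrightarrow> is_M_lambda l (Ml l)"
    and "is_M_renyi M"
    and "compact K" and "K \<subseteq> {0..}"
  shows "uniform_limit (K - {1, 2}) (\<lambda>l x. deriv0 (Ml l) x) (\<lambda>x. deriv0 M x) (at_right 0)"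
proof -
  interpret parking_limit Ml M
    using assms(1,2) by unfold_locales
  obtain b where "K \<subseteq> {0..b}"
    using assms(3,4) compact_imp_bounded[of K] by (force simp: bounded_iff)
  then have "K - {1, 2} \<subseteq> ({0..<2} - {1}) \<union> {2<..b}"
    by auto
  moreover have "uniform_limit (({0..<2} - {1}) \<union> {2<..b}) (\<lambda>l. deriv0 (Ml l)) (deriv0 M) (at_right 0)"
    using uniform_limit_deriv0_below_2 uniform_limit_deriv0_beyond_2 by (rule uniform_limit_on_Un)
  ultimately show ?thesis
    by (rule uniform_limit_on_subset[rotated])
qed

end
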